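(* Let $d\ge 4$ and let $\alpha(x,y)$ be a very general binary form of degree $d$ over $\mathbb{C}$ (i.e. outside a countable union of proper subvarieties of the space of binary forms of degree $d$). Then the binary forms $h(x,y)$ (of any degree) satisfying $T(\alpha,h)=0$ are exactly the linear combinations of: $1$ (in degree 0); $x$ and $y$ (in degree 1); $\alpha_1$ and $\alpha_2$ (in degree $d-1$); and $\alpha$ (in degree $d$). In particular, for any degree other than $0,1,d-1,d$, the only such $h$ is $h=0$.
   Context: For binary forms $\alpha(x,y)$, $h(x,y)$ write $\alpha_1=\partial\alpha/\partial x$, $\alpha_2=\partial\alpha/\partial y$, $\alpha_{112}=\partial^3\alpha/\partial x^2\partial y$, etc., and similarly for $h$. Define $T(\alpha,h)=h_{11}(\alpha_{112}\alpha_{222}-\alpha_{122}^2)+h_{12}(\alpha_{112}\alpha_{122}-\alpha_{111}\alpha_{222})+h_{22}(\alpha_{111}\alpha_{122}-\alpha_{112}^2).$ *)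

theory Defs
  imports "HOL-Analysis.Analysis"
begin

definition bform :: "nat \<Rightarrow> (nat \<Rightarrow> complex) \<Rightarrow> complex \<Rightarrow> complex \<Rightarrow> complex" where
  "bform n c = (\<lambda>x y. \<Sum>i\<le>n. c i * x ^ i * y ^ (n - i))"

definition D1 :: "(complex \<Rightarrow> complex \<Rightarrow> complex) \<Rightarrow> complex \<Rightarrow> complex \<Rightarrow> complex" where
  "D1 f = (\<lambda>x y. deriv (\<lambda>t. f t y) x)"

definition D2 :: "(complex \<Rightarrow> complex \<Rightarrow> complex) \<Rightarrow> complex \<Rightarrow> complex \<Rightarrow> complex" where
  "D2 f = (\<lambda>x y. deriv (\<lambda>t. f x t) y)"

definition Top :: "(complex \<Rightarrow> complex \<Rightarrow> complex) \<Rightarrow> (complex \<Rightarrow> complex \<Rightarrow> complex)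
    \<Rightarrow> complex \<Rightarrow> complex \<Rightarrow> complex" where
  "Top a h = (\<lambda>x y.
     let a111 = D1 (D1 (D1 a)) x y; a112 = D2 (D1 (D1 a)) x y;
         a122 = D2 (D2 (D1 a)) x y; a222 = D2 (D2 (D2 a)) x y;
         h11 = D1 (D1 h) x y; h12 = D2 (D1 h) x y; h22 = D2 (D2 h) x y
     in h11 * (a112 * a222 - a122 ^ 2) + h12 * (a112 * a122 - a111 * a222)
        + h22 * (a111 * a122 - a112 ^ 2))"

definition poly_fun :: "nat \<Rightarrow> ((nat \<Rightarrow> complex) \<Rightarrow> complex) \<Rightarrow> bool" where
  "poly_fun n P \<longleftrightarrow> (\<exists>M coef. finite M \<and>
     P = (\<lambda>c. \<Sum>m\<in>M. coef m * (\<Prod>i\<le>n. c i ^ m i)))"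

definition proper_subvariety :: "nat \<Rightarrow> (nat \<Rightarrow> complex) set \<Rightarrow> bool" where
  "proper_subvariety n V \<longleftrightarrow> V \<noteq> UNIV \<and>
     (\<exists>S. (\<forall>P\<in>S. poly_fun n P) \<and> V = {c. \<forall>P\<in>S. P c = 0})"

definition very_general :: "nat \<Rightarrow> ((nat \<Rightarrow> complex) \<Rightarrow> bool) \<Rightarrow> bool" where
  "very_general n Q \<longleftrightarrow> (\<exists>V :: nat \<Rightarrow> (nat \<Rightarrow> complex) set.
     (\<forall>k. proper_subvariety n (V k)) \<and> (\<forall>c. c \<notin> (\<Union>k. V k) \<longrightarrow> Q c))"

end

theory Submission
  imports Defs "Jordan_Normal_Form.Determinant"
begin

text \<open>Write h = \<Sum>_p b_p x^p y^(e-p). Every coefficient of T(\<alpha>, h) is linear in b and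
  quadratic in the coefficients of \<alpha>, so the solutions h of degree e form the kernel of a
  matrix M(\<alpha>). The identity T(\<alpha>, \<alpha>_1) = 0, its analogue for \<alpha>_2 (equality of mixed
  partials) and, via Euler's identity, T(\<alpha>, \<alpha>) = 0 exhibit the expected solutions.
  For \<alpha> = x^2 y^(d-2) the matrix M(\<alpha>) is diagonal, and its entry at p is
  -2(d-2)^2 Q(p, e-p) for an explicit quadratic Q that vanishes only at p = 2 when e = d and
  at p = 1, 2 when e = d - 1. Replacing those rows by unit rows yields a square matrix whose
  determinant, times the minor of the expected solutions at those coordinates, is a
  polynomial in the coefficients of \<alpha> that does not vanish at x^2 y^(d-2). Off its zero set
  any solution, minus the suitable combination of expected solutions, vanishes at the
  pinned coordinates and hence everywhere. One such polynomial per degree e \<ge> 2 gives the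
  countably many proper subvarieties.\<close>

section \<open>Partial derivatives of binary forms\<close>

text \<open>(\<partial>/\<partial>x)^r (\<partial>/\<partial>y)^s (x^i y^(n-i)) = deriv_weight r s n i * x^(i-r) y^(n-i-s)\<close>
definition deriv_weight :: "nat \<Rightarrow> nat \<Rightarrow> nat \<Rightarrow> nat \<Rightarrow> complex" where
  "deriv_weight r s n i = (\<Prod>k<r. of_nat (i - k)) * (\<Prod>k<s. of_nat (n - i - k))"

definition bform_deriv :: "nat \<Rightarrow> nat \<Rightarrow> nat \<Rightarrow> (nat \<Rightarrow> complex) \<Rightarrow> complex \<Rightarrow> complex \<Rightarrow> complex" where
  "bform_deriv r s n c = (\<lambda>x y. \<Sum>i\<le>n. c i * deriv_weight r s n i * x ^ (i - r) * y ^ (n - i - s))"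

lemma bform_eq_bform_deriv: "bform n c = bform_deriv 0 0 n c"
  by (simp add: bform_def bform_deriv_def deriv_weight_def)

lemma deriv_weight_Suc_left: "deriv_weight (Suc r) s n i = deriv_weight r s n i * of_nat (i - r)"
  by (simp add: deriv_weight_def)

lemma deriv_weight_Suc_right: "deriv_weight r (Suc s) n i = deriv_weight r s n i * of_nat (n - i - s)"
  by (simp add: deriv_weight_def)

lemma deriv_weight_nonzeroD:
  assumes "deriv_weight r s n i \<noteq> 0"
  shows "r \<le> i" "s \<le> n - i"
proof -
  show "r \<le> i"
  proof (rule ccontr)
    assume "\<not> r \<le> i"
    then have "(\<Prod>k<r. of_nat (i - k) :: complex) = 0"
      by (intro prod_zero bexI[of _ i]) auto
    with assms show False by (simp add: deriv_weight_def)
  qed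
  show "s \<le> n - i"
  proof (rule ccontr)
    assume "\<not> s \<le> n - i"
    then have "(\<Prod>k<s. of_nat (n - i - k) :: complex) = 0"
      by (intro prod_zero bexI[of _ "n - i"]) auto
    with assms show False by (simp add: deriv_weight_def)
  qed
qed

lemma deriv_weight_nonzeroE:
  assumes "deriv_weight r s n k \<noteq> 0" and "k \<le> n"
  obtains u v where "k = r + u" and "n = k + s + v"
proof -
  have "k = r + (k - r)" and "n = k + s + (n - k - s)"
    using deriv_weight_nonzeroD[OF assms(1)] assms(2) by linarith+
  then show thesis by (rule that)
qed

lemma D1_bform_deriv: "D1 (bform_deriv r s n c) = bform_deriv (Suc r) s n c"
proof (intro ext)
  fix x y :: complex
  have "((\<lambda>t. \<Sum>i\<le>n. c i * deriv_weight r s n i * t ^ (i - r) * y ^ (n - i - s)) has_field_derivative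
      (\<Sum>i\<le>n. c i * deriv_weight r s n i * (of_nat (i - r) * (1 * x ^ (i - r - Suc 0))) * y ^ (n - i - s))) (at x)"
    by (intro DERIV_sum DERIV_cmult DERIV_cmult_right DERIV_power DERIV_ident)
  then show "D1 (bform_deriv r s n c) x y = bform_deriv (Suc r) s n c x y"
    by (simp add: D1_def bform_deriv_def deriv_weight_Suc_left DERIV_imp_deriv mult_ac)
qed

lemma D2_bform_deriv: "D2 (bform_deriv r s n c) = bform_deriv r (Suc s) n c"
proof (intro ext)
  fix x y :: complex
  have "((\<lambda>t. \<Sum>i\<le>n. c i * deriv_weight r s n i * x ^ (i - r) * t ^ (n - i - s)) has_field_derivative
      (\<Sum>i\<le>n. c i * deriv_weight r s n i * x ^ (i - r) * (of_nat (n - i - s) * (1 * y ^ (n - i - s - Suc 0))))) (at y)"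
    by (intro DERIV_sum DERIV_cmult DERIV_power DERIV_ident)
  then show "D2 (bform_deriv r s n c) x y = bform_deriv r (Suc s) n c x y"
    by (simp add: D2_def bform_deriv_def deriv_weight_Suc_right DERIV_imp_deriv mult_ac)
qed

lemma bform_deriv_euler:
  "x * bform_deriv (Suc r) s n c x y + y * bform_deriv r (Suc s) n c x y
     = of_nat (n - r - s) * bform_deriv r s n c x y"
  unfolding bform_deriv_def sum_distrib_left sum.distrib[symmetric]
proof (intro sum.cong refl)
  fix i assume "i \<in> {..n}"
  then have "i \<le> n" by simp
  let ?m = "c i * deriv_weight r s n i * x ^ (i - r) * y ^ (n - i - s)"
  have px: "x * x ^ (i - Suc r) * of_nat (i - r) = x ^ (i - r) * (of_nat (i - r) :: complex)"
    by (cases "r < i") (auto simp: Suc_diff_Suc simp flip: power_Suc)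
  have py: "y * y ^ (n - i - Suc s) * of_nat (n - i - s) = y ^ (n - i - s) * (of_nat (n - i - s) :: complex)"
    by (cases "s < n - i") (auto simp: Suc_diff_Suc simp flip: power_Suc)
  have "x * (c i * deriv_weight (Suc r) s n i * x ^ (i - Suc r) * y ^ (n - i - s))
      = c i * deriv_weight r s n i * y ^ (n - i - s) * (x * x ^ (i - Suc r) * of_nat (i - r))"
    by (simp add: deriv_weight_Suc_left mult_ac)
  also have "\<dots> = of_nat (i - r) * ?m"
    unfolding px by (simp add: mult_ac)
  finally have dx: "x * (c i * deriv_weight (Suc r) s n i * x ^ (i - Suc r) * y ^ (n - i - s))
      = of_nat (i - r) * ?m" .
  have "y * (c i * deriv_weight r (Suc s) n i * x ^ (i - r) * y ^ (n - i - Suc s))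
      = c i * deriv_weight r s n i * x ^ (i - r) * (y * y ^ (n - i - Suc s) * of_nat (n - i - s))"
    by (simp add: deriv_weight_Suc_right mult_ac)
  also have "\<dots> = of_nat (n - i - s) * ?m"
    unfolding py by (simp add: mult_ac)
  finally have dy: "y * (c i * deriv_weight r (Suc s) n i * x ^ (i - r) * y ^ (n - i - Suc s))
      = of_nat (n - i - s) * ?m" .
  have "of_nat (i - r) * ?m + of_nat (n - i - s) * ?m = of_nat (n - r - s) * ?m"
  proof (cases "deriv_weight r s n i = 0")
    case False
    note bounds = deriv_weight_nonzeroD[OF False]
    have "n - r - s = (i - r) + (n - i - s)"
      using bounds \<open>i \<le> n\<close> by linarith
    then show ?thesis by (simp add: distrib_right)
  qed simp
  then show "x * (c i * deriv_weight (Suc r) s n i * x ^ (i - Suc r) * y ^ (n - i - s))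
      + y * (c i * deriv_weight r (Suc s) n i * x ^ (i - r) * y ^ (n - i - Suc s))
    = of_nat (n - r - s) * ?m"
    unfolding dx dy .
qed

section \<open>The coefficient matrix of T(\<alpha>, -)\<close>

lemma sum_product_triple:
  fixes f g h :: "_ \<Rightarrow> 'a::comm_semiring_0"
  shows "sum f A * sum g B * sum h C = (\<Sum>p\<in>A. \<Sum>i\<in>B. \<Sum>j\<in>C. f p * g i * h j)"
proof -
  have "sum f A * sum g B * sum h C = (\<Sum>p\<in>A. f p * (sum g B * sum h C))"
    by (simp add: sum_distrib_right mult.assoc)
  also have "\<dots> = (\<Sum>p\<in>A. \<Sum>i\<in>B. \<Sum>j\<in>C. f p * (g i * h j))"
    by (simp only: sum_product) (simp add: sum_distrib_left)
  finally show ?thesis by (simp add: mult.assoc)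
qed

lemma bform_deriv_triple_product:
  "bform_deriv r1 s1 n1 c1 x y * bform_deriv r2 s2 n2 c2 x y * bform_deriv r3 s3 n3 c3 x y =
    (\<Sum>p\<le>n1. \<Sum>i\<le>n2. \<Sum>j\<le>n3. c1 p * c2 i * c3 j *
        (deriv_weight r1 s1 n1 p * deriv_weight r2 s2 n2 i * deriv_weight r3 s3 n3 j) *
        x ^ (p + i + j - (r1 + r2 + r3)) *
        y ^ (n1 + n2 + n3 - (r1 + r2 + r3) - (s1 + s2 + s3) - (p + i + j - (r1 + r2 + r3))))"
  unfolding bform_deriv_def sum_product_triple
proof (intro sum.cong refl)
  fix p i j assume "p \<in> {..n1}" "i \<in> {..n2}" "j \<in> {..n3}"
  then have "p \<le> n1" "i \<le> n2" "j \<le> n3" by simp_all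
  let ?w = "deriv_weight r1 s1 n1 p * deriv_weight r2 s2 n2 i * deriv_weight r3 s3 n3 j"
  have "c1 p * deriv_weight r1 s1 n1 p * x ^ (p - r1) * y ^ (n1 - p - s1) *
      (c2 i * deriv_weight r2 s2 n2 i * x ^ (i - r2) * y ^ (n2 - i - s2)) *
      (c3 j * deriv_weight r3 s3 n3 j * x ^ (j - r3) * y ^ (n3 - j - s3)) =
    c1 p * c2 i * c3 j * ?w * (x ^ (p - r1) * x ^ (i - r2) * x ^ (j - r3)) *
      (y ^ (n1 - p - s1) * y ^ (n2 - i - s2) * y ^ (n3 - j - s3))" (is "?L = _")
    by (simp only: mult_ac)
  also have "\<dots> = c1 p * c2 i * c3 j * ?w * x ^ (p + i + j - (r1 + r2 + r3)) *
      y ^ (n1 + n2 + n3 - (r1 + r2 + r3) - (s1 + s2 + s3) - (p + i + j - (r1 + r2 + r3)))"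
    (is "_ = ?R")
  proof (cases "?w = 0")
    case False
    then have w1: "deriv_weight r1 s1 n1 p \<noteq> 0" and w2: "deriv_weight r2 s2 n2 i \<noteq> 0"
      and w3: "deriv_weight r3 s3 n3 j \<noteq> 0" by auto
    obtain u1 v1 where "p = r1 + u1" "n1 = p + s1 + v1"
      using w1 \<open>p \<le> n1\<close> by (rule deriv_weight_nonzeroE)
    moreover obtain u2 v2 where "i = r2 + u2" "n2 = i + s2 + v2"
      using w2 \<open>i \<le> n2\<close> by (rule deriv_weight_nonzeroE)
    moreover obtain u3 v3 where "j = r3 + u3" "n3 = j + s3 + v3"
      using w3 \<open>j \<le> n3\<close> by (rule deriv_weight_nonzeroE)
    ultimately show ?thesis by (simp add: power_add)
  qed auto
  finally show "?L = ?R" .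
qed

text \<open>T with every partial derivative replaced by its weight on the monomials
  x^p y^(e-p) of h and x^i y^(d-i), x^j y^(d-j) of \<alpha>.\<close>
definition top_weight :: "nat \<Rightarrow> nat \<Rightarrow> nat \<Rightarrow> nat \<Rightarrow> nat \<Rightarrow> complex" where
  "top_weight d e p i j =
     deriv_weight 2 0 e p * (deriv_weight 2 1 d i * deriv_weight 0 3 d j - deriv_weight 1 2 d i * deriv_weight 1 2 d j)
   + deriv_weight 1 1 e p * (deriv_weight 2 1 d i * deriv_weight 1 2 d j - deriv_weight 3 0 d i * deriv_weight 0 3 d j)
   + deriv_weight 0 2 e p * (deriv_weight 3 0 d i * deriv_weight 1 2 d j - deriv_weight 2 1 d i * deriv_weight 2 1 d j)"

lemma Top_bform_deriv:
  "Top (bform d a) (bform e b) x y =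
     bform_deriv 2 0 e b x y * bform_deriv 2 1 d a x y * bform_deriv 0 3 d a x y
   - bform_deriv 2 0 e b x y * bform_deriv 1 2 d a x y * bform_deriv 1 2 d a x y
   + bform_deriv 1 1 e b x y * bform_deriv 2 1 d a x y * bform_deriv 1 2 d a x y
   - bform_deriv 1 1 e b x y * bform_deriv 3 0 d a x y * bform_deriv 0 3 d a x y
   + bform_deriv 0 2 e b x y * bform_deriv 3 0 d a x y * bform_deriv 1 2 d a x y
   - bform_deriv 0 2 e b x y * bform_deriv 2 1 d a x y * bform_deriv 2 1 d a x y"
  by (simp add: Top_def Let_def bform_eq_bform_deriv D1_bform_deriv D2_bform_deriv
      numeral_2_eq_2 numeral_3_eq_3 power2_eq_square algebra_simps)

text \<open>Each of the six products differentiates four times in x and four times in y.\<close>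
lemma Top_bform_expansion:
  "Top (bform d a) (bform e b) x y =
    (\<Sum>p\<le>e. \<Sum>i\<le>d. \<Sum>j\<le>d. b p * a i * a j * top_weight d e p i j *
        x ^ (p + i + j - 4) * y ^ (e + 2 * d - 8 - (p + i + j - 4)))"
  unfolding Top_bform_deriv bform_deriv_triple_product sum_subtractf[symmetric] sum.distrib[symmetric]
  by (intro sum.cong refl) (simp add: top_weight_def numeral_eq_Suc algebra_simps)

lemma sum_collect_exponents:
  fixes G :: "'i \<Rightarrow> 'a::comm_semiring_1" and E :: "'i \<Rightarrow> nat"
  assumes "finite I" and "\<And>i. i \<in> I \<Longrightarrow> E i \<le> K"
  shows "(\<Sum>i\<in>I. G i * f (E i)) = (\<Sum>k\<le>K. (\<Sum>i\<in>I. if E i = k then G i else 0) * f k)"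
proof -
  have "(\<Sum>k\<le>K. (\<Sum>i\<in>I. if E i = k then G i else 0) * f k)
      = (\<Sum>k\<le>K. \<Sum>i\<in>I. if E i = k then G i * f k else 0)"
    unfolding sum_distrib_right by (intro sum.cong refl) simp
  also have "\<dots> = (\<Sum>i\<in>I. \<Sum>k\<le>K. if E i = k then G i * f k else 0)"
    by (rule sum.swap)
  also have "\<dots> = (\<Sum>i\<in>I. G i * f (E i))"
    using assms(2) by (intro sum.cong refl) simp
  finally show ?thesis ..
qed

definition top_coeff :: "nat \<Rightarrow> nat \<Rightarrow> (nat \<Rightarrow> complex) \<Rightarrow> nat \<Rightarrow> nat \<Rightarrow> complex" where
  "top_coeff d e a k p =
     (\<Sum>(i, j)\<in>{..d} \<times> {..d}. if p + i + j - 4 = k then a i * a j * top_weight d e p i j else 0)"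

lemma Top_bform_coeffs:
  "Top (bform d a) (bform e b) x y =
    (\<Sum>k\<le>e + 2 * d. (\<Sum>p\<le>e. b p * top_coeff d e a k p) * x ^ k * y ^ (e + 2 * d - 8 - k))"
proof -
  define f where "f k = x ^ k * y ^ (e + 2 * d - 8 - k)" for k
  have collect: "(\<Sum>i\<le>d. \<Sum>j\<le>d. a i * a j * top_weight d e p i j * f (p + i + j - 4))
      = (\<Sum>k\<le>e + 2 * d. top_coeff d e a k p * f k)" if "p \<le> e" for p
  proof -
    have "(\<Sum>i\<le>d. \<Sum>j\<le>d. a i * a j * top_weight d e p i j * f (p + i + j - 4))
        = (\<Sum>ij\<in>{..d} \<times> {..d}.
             a (fst ij) * a (snd ij) * top_weight d e p (fst ij) (snd ij) * f (p + fst ij + snd ij - 4))"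
      by (simp add: sum.cartesian_product case_prod_unfold)
    also have "\<dots> = (\<Sum>k\<le>e + 2 * d. (\<Sum>ij\<in>{..d} \<times> {..d}. if p + fst ij + snd ij - 4 = k
          then a (fst ij) * a (snd ij) * top_weight d e p (fst ij) (snd ij) else 0) * f k)"
      by (rule sum_collect_exponents) (use that in auto)
    also have "\<dots> = (\<Sum>k\<le>e + 2 * d. top_coeff d e a k p * f k)"
      by (simp add: top_coeff_def case_prod_unfold)
    finally show ?thesis .
  qed
  have "Top (bform d a) (bform e b) x y
      = (\<Sum>p\<le>e. b p * (\<Sum>i\<le>d. \<Sum>j\<le>d. a i * a j * top_weight d e p i j * f (p + i + j - 4)))"
    unfolding Top_bform_expansion f_def by (simp add: sum_distrib_left mult_ac)
  also have "\<dots> = (\<Sum>p\<le>e. b p * (\<Sum>k\<le>e + 2 * d. top_coeff d e a k p * f k))"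
    using collect by simp
  also have "\<dots> = (\<Sum>k\<le>e + 2 * d. (\<Sum>p\<le>e. b p * top_coeff d e a k p) * f k)"
    by (simp add: sum_distrib_left sum_distrib_right mult_ac sum.swap[of _ "{..e}"])
  finally show ?thesis by (simp add: f_def mult.assoc)
qed

definition top_kernel :: "nat \<Rightarrow> nat \<Rightarrow> (nat \<Rightarrow> complex) \<Rightarrow> (nat \<Rightarrow> complex) \<Rightarrow> bool" where
  "top_kernel d e a b \<longleftrightarrow> (\<forall>k. (\<Sum>p\<le>e. b p * top_coeff d e a k p) = 0)"

lemma top_coeff_eq_0_above:
  assumes "e + 2 * d < k" and "p \<le> e"
  shows "top_coeff d e a k p = 0"
  using assms by (auto simp: top_coeff_def intro!: sum.neutral)

lemma Top_bform_eq_0_iff: "(\<forall>x y. Top (bform d a) (bform e b) x y = 0) \<longleftrightarrow> top_kernel d e a b"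
proof
  assume Top0: "\<forall>x y. Top (bform d a) (bform e b) x y = 0"
  have "\<forall>x. (\<Sum>k\<le>e + 2 * d. (\<Sum>p\<le>e. b p * top_coeff d e a k p) * x ^ k) = 0"
    using Top0 Top_bform_coeffs[of d a e b _ 1] by simp
  then have "\<forall>k\<le>e + 2 * d. (\<Sum>p\<le>e. b p * top_coeff d e a k p) = 0"
    by (simp only: polyfun_eq_0)
  moreover have "(\<Sum>p\<le>e. b p * top_coeff d e a k p) = 0" if "e + 2 * d < k" for k
    using that top_coeff_eq_0_above by simp
  ultimately show "top_kernel d e a b"
    unfolding top_kernel_def by (meson not_le)
qed (simp add: top_kernel_def Top_bform_coeffs)

lemma top_kernel_lincomb:
  assumes "top_kernel d e a c" and "top_kernel d e a c'"
  shows "top_kernel d e a (\<lambda>p. s * c p + t * c' p)"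
  using assms by (simp add: top_kernel_def distrib_right sum.distrib mult.assoc flip: sum_distrib_left)

lemma top_kernel_cong:
  assumes "\<And>p. p \<le> e \<Longrightarrow> b p = b' p"
  shows "top_kernel d e a b \<longleftrightarrow> top_kernel d e a b'"
  using assms unfolding top_kernel_def by (metis (no_types, lifting) atMost_iff sum.cong)

definition dx_coeffs :: "(nat \<Rightarrow> complex) \<Rightarrow> nat \<Rightarrow> complex" where
  "dx_coeffs c i = of_nat (Suc i) * c (Suc i)"

definition dy_coeffs :: "nat \<Rightarrow> (nat \<Rightarrow> complex) \<Rightarrow> nat \<Rightarrow> complex" where
  "dy_coeffs n c i = of_nat (n - i) * c i"

lemma D1_bform:
  assumes "1 \<le> n"
  shows "D1 (bform n c) = bform (n - 1) (dx_coeffs c)"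
proof -
  obtain m where n: "n = Suc m" using assms by (cases n) auto
  show ?thesis
  proof (intro ext)
    fix x y
    show "D1 (bform n c) x y = bform (n - 1) (dx_coeffs c) x y"
      unfolding bform_eq_bform_deriv D1_bform_deriv unfolding bform_deriv_def n
      by (subst sum.atMost_Suc_shift) (simp add: deriv_weight_def dx_coeffs_def mult_ac)
  qed
qed

lemma D2_bform:
  assumes "1 \<le> n"
  shows "D2 (bform n c) = bform (n - 1) (dy_coeffs n c)"
proof -
  obtain m where n: "n = Suc m" using assms by (cases n) auto
  show ?thesis
    unfolding bform_eq_bform_deriv D2_bform_deriv
    by (auto simp: n bform_deriv_def deriv_weight_def dy_coeffs_def mult_ac intro!: ext sum.cong)
qed

section \<open>The expected solutions\<close>

lemma Top_D1_self: "Top f (D1 f) x y = 0"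
  by (simp add: Top_def Let_def power2_eq_square algebra_simps)

lemma Top_bform_D2: "Top (bform d a) (D2 (bform d a)) x y = 0"
  by (simp add: Top_def Let_def bform_eq_bform_deriv D1_bform_deriv D2_bform_deriv
      power2_eq_square algebra_simps)

lemma Top_bform_self:
  assumes "2 < d"
  shows "Top (bform d a) (bform d a) x y = 0"
proof -
  let ?A = "\<lambda>r s. bform_deriv r s d a x y"
  have Top: "Top (bform d a) (bform d a) x y
      = ?A 2 0 * (?A 2 1 * ?A 0 3 - ?A 1 2 * ?A 1 2) + ?A 1 1 * (?A 2 1 * ?A 1 2 - ?A 3 0 * ?A 0 3)
      + ?A 0 2 * (?A 3 0 * ?A 1 2 - ?A 2 1 * ?A 2 1)"
    by (simp add: Top_def Let_def bform_eq_bform_deriv D1_bform_deriv D2_bform_deriv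
        numeral_2_eq_2 numeral_3_eq_3 power2_eq_square)
  have euler: "x * ?A 3 0 + y * ?A 2 1 = of_nat (d - 2) * ?A 2 0"
    "x * ?A 2 1 + y * ?A 1 2 = of_nat (d - 2) * ?A 1 1"
    "x * ?A 1 2 + y * ?A 0 3 = of_nat (d - 2) * ?A 0 2"
    using bform_deriv_euler[of x 2 0 d a y] bform_deriv_euler[of x 1 1 d a y]
      bform_deriv_euler[of x 0 2 d a y]
    by (simp_all add: numeral_eq_Suc)
  have "of_nat (d - 2) * Top (bform d a) (bform d a) x y
      = (of_nat (d - 2) * ?A 2 0) * (?A 2 1 * ?A 0 3 - ?A 1 2 * ?A 1 2)
      + (of_nat (d - 2) * ?A 1 1) * (?A 2 1 * ?A 1 2 - ?A 3 0 * ?A 0 3)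
      + (of_nat (d - 2) * ?A 0 2) * (?A 3 0 * ?A 1 2 - ?A 2 1 * ?A 2 1)"
    unfolding Top by (simp only: distrib_left mult.assoc)
  also have "\<dots> = 0"
    unfolding euler[symmetric] by (simp add: algebra_simps)
  finally have "of_nat (d - 2) * Top (bform d a) (bform d a) x y = 0" .
  moreover have "d - 2 \<noteq> 0"
    using assms by simp
  then have "(of_nat (d - 2) :: complex) \<noteq> 0"
    by (simp only: of_nat_eq_0_iff not_False_eq_True)
  ultimately show ?thesis by simp
qed

lemma top_kernel_dx: "1 \<le> d \<Longrightarrow> top_kernel d (d - 1) a (dx_coeffs a)"
  using Top_D1_self[of "bform d a"] by (simp add: D1_bform flip: Top_bform_eq_0_iff)

lemma top_kernel_dy: "1 \<le> d \<Longrightarrow> top_kernel d (d - 1) a (dy_coeffs d a)"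
  using Top_bform_D2[of d a] by (simp add: D2_bform flip: Top_bform_eq_0_iff)

lemma top_kernel_self: "2 < d \<Longrightarrow> top_kernel d d a a"
  using Top_bform_self[of d a] by (simp flip: Top_bform_eq_0_iff)

lemma bform_eq_iff: "bform n c = bform n c' \<longleftrightarrow> (\<forall>i\<le>n. c i = c' i)"
proof
  assume eq: "bform n c = bform n c'"
  have "\<forall>x. (\<Sum>i\<le>n. c i * x ^ i) = (\<Sum>i\<le>n. c' i * x ^ i)"
    using fun_cong[OF fun_cong[OF eq], of _ 1] by (simp add: bform_def)
  then show "\<forall>i\<le>n. c i = c' i" by (simp only: polyfun_eq_coeffs)
qed (auto simp: bform_def intro!: ext sum.cong)

lemma bform_lincomb: "(\<lambda>x y. s * bform n c x y + t * bform n c' x y) = bform n (\<lambda>i. s * c i + t * c' i)"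
  by (simp add: bform_def sum_distrib_left sum.distrib algebra_simps)

lemma poly_fun_sum_monomials:
  assumes "finite S"
  shows "poly_fun n (\<lambda>c. \<Sum>s\<in>S. cf s * (\<Prod>i\<le>n. c i ^ E s i))"
proof -
  define coef where "coef m = (\<Sum>s\<in>{s\<in>S. E s = m}. cf s)" for m
  have "(\<Sum>s\<in>S. cf s * (\<Prod>i\<le>n. c i ^ E s i)) = (\<Sum>m\<in>E ` S. coef m * (\<Prod>i\<le>n. c i ^ m i))"
    for c :: "nat \<Rightarrow> complex"
  proof -
    have "(\<Sum>m\<in>E ` S. coef m * (\<Prod>i\<le>n. c i ^ m i))
        = (\<Sum>m\<in>E ` S. \<Sum>s\<in>{s\<in>S. E s = m}. cf s * (\<Prod>i\<le>n. c i ^ E s i))"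
      unfolding coef_def sum_distrib_right by (intro sum.cong refl) auto
    also have "\<dots> = (\<Sum>s\<in>S. cf s * (\<Prod>i\<le>n. c i ^ E s i))"
      by (rule sum.group) (use assms in auto)
    finally show ?thesis ..
  qed
  then show ?thesis
    unfolding poly_fun_def using assms by blast
qed

lemma poly_fun_const: "poly_fun n (\<lambda>c. k)"
  using poly_fun_sum_monomials[of "{()}" n "\<lambda>_. k" "\<lambda>_ _. 0"] by simp

lemma poly_fun_coeff:
  assumes "j \<le> n"
  shows "poly_fun n (\<lambda>c. c j)"
proof -
  have "(\<Prod>i\<le>n. c i ^ (if i = j then 1 else 0)) = c j" for c :: "nat \<Rightarrow> complex"
    using assms by (simp add: power_0 prod.delta[symmetric] if_distrib[of "power _"] cong: if_cong)
  then show ?thesis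
    using poly_fun_sum_monomials[of "{()}" n "\<lambda>_. 1" "\<lambda>_ i. if i = j then 1 else 0"] by simp
qed

lemma poly_fun_add:
  assumes "poly_fun n P" and "poly_fun n Q"
  shows "poly_fun n (\<lambda>c. P c + Q c)"
proof -
  obtain M1 coef1 where M1: "finite M1" and P: "P = (\<lambda>c. \<Sum>m\<in>M1. coef1 m * (\<Prod>i\<le>n. c i ^ m i))"
    using assms(1) unfolding poly_fun_def by blast
  obtain M2 coef2 where M2: "finite M2" and Q: "Q = (\<lambda>c. \<Sum>m\<in>M2. coef2 m * (\<Prod>i\<le>n. c i ^ m i))"
    using assms(2) unfolding poly_fun_def by blast
  have "(\<lambda>c. P c + Q c) = (\<lambda>c. \<Sum>s\<in>M1 <+> M2. case_sum coef1 coef2 s *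
      (\<Prod>i\<le>n. c i ^ case_sum id id s i))"
    by (simp add: P Q sum.Plus M1 M2)
  then show ?thesis
    using poly_fun_sum_monomials[of "M1 <+> M2" n] M1 M2 by simp
qed

lemma poly_fun_mult:
  assumes "poly_fun n P" and "poly_fun n Q"
  shows "poly_fun n (\<lambda>c. P c * Q c)"
proof -
  obtain M1 coef1 where M1: "finite M1" and P: "P = (\<lambda>c. \<Sum>m\<in>M1. coef1 m * (\<Prod>i\<le>n. c i ^ m i))"
    using assms(1) unfolding poly_fun_def by blast
  obtain M2 coef2 where M2: "finite M2" and Q: "Q = (\<lambda>c. \<Sum>m\<in>M2. coef2 m * (\<Prod>i\<le>n. c i ^ m i))"
    using assms(2) unfolding poly_fun_def by blast
  have "(\<lambda>c. P c * Q c) = (\<lambda>c. \<Sum>s\<in>M1 \<times> M2. (coef1 (fst s) * coef2 (snd s)) *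
      (\<Prod>i\<le>n. c i ^ (fst s i + snd s i)))"
    unfolding P Q sum_product sum.cartesian_product
    by (intro ext sum.cong) (auto simp: power_add prod.distrib mult_ac)
  then show ?thesis
    using poly_fun_sum_monomials[of "M1 \<times> M2" n] M1 M2 by simp
qed

lemma poly_fun_diff:
  assumes "poly_fun n P" and "poly_fun n Q"
  shows "poly_fun n (\<lambda>c. P c - Q c)"
  using poly_fun_add[OF assms(1) poly_fun_mult[OF poly_fun_const[of n "-1"] assms(2)]] by simp

lemma poly_fun_sum:
  assumes "finite S" and "\<And>s. s \<in> S \<Longrightarrow> poly_fun n (P s)"
  shows "poly_fun n (\<lambda>c. \<Sum>s\<in>S. P s c)"
  using assms by (induction S rule: finite_induct) (simp_all add: poly_fun_const poly_fun_add)

lemma poly_fun_prod: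
  assumes "finite S" and "\<And>s. s \<in> S \<Longrightarrow> poly_fun n (P s)"
  shows "poly_fun n (\<lambda>c. \<Prod>s\<in>S. P s c)"
  using assms by (induction S rule: finite_induct) (simp_all add: poly_fun_const poly_fun_mult)

lemma poly_fun_if:
  assumes "poly_fun n P" and "poly_fun n Q"
  shows "poly_fun n (\<lambda>c. if b then P c else Q c)"
  using assms by (cases b) simp_all

lemma poly_fun_det:
  assumes "\<And>i j. i < m \<Longrightarrow> j < m \<Longrightarrow> poly_fun n (\<lambda>c. f c i j)"
  shows "poly_fun n (\<lambda>c. det (mat m m (\<lambda>(i, j). f c i j)))"
proof -
  have "det (mat m m (\<lambda>(i, j). f c i j)) =
      (\<Sum>p\<in>{p. p permutes {0..<m}}. signof p * (\<Prod>i\<in>{0..<m}. f c i (p i)))" for c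
    by (subst det_def'[of _ m]) (auto intro!: sum.cong prod.cong simp: permutes_in_image)
  then show ?thesis
    using assms
    by (simp only:) (intro poly_fun_sum poly_fun_mult poly_fun_const poly_fun_prod;
        auto simp: finite_permutations permutes_in_image)
qed

lemma poly_fun_top_coeff: "poly_fun d (\<lambda>a. top_coeff d e a k p)"
  unfolding top_coeff_def case_prod_unfold
  by (intro poly_fun_sum poly_fun_if poly_fun_mult poly_fun_coeff poly_fun_const) auto

lemma proper_subvariety_zero_set:
  assumes "poly_fun n P" and "P c \<noteq> 0"
  shows "proper_subvariety n {c. P c = 0}"
  unfolding proper_subvariety_def using assms by (auto intro!: exI[of _ "{P}"])

section \<open>The form x^2 y^(d-2)\<close>

definition monomial_coeffs :: "nat \<Rightarrow> nat \<Rightarrow> complex" where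
  "monomial_coeffs j i = (if i = j then 1 else 0)"

lemma top_coeff_monomial2:
  assumes "2 \<le> d"
  shows "top_coeff d e (monomial_coeffs 2) k p = (if k = p then top_weight d e p 2 2 else 0)"
proof -
  have "top_coeff d e (monomial_coeffs 2) k p
      = (\<Sum>ij\<in>{..d} \<times> {..d}. if ij = (2, 2) then (if k = p then top_weight d e p 2 2 else 0) else 0)"
    unfolding top_coeff_def by (intro sum.cong refl) (auto simp: monomial_coeffs_def split: if_splits)
  also have "\<dots> = (if k = p then top_weight d e p 2 2 else 0)"
    using assms by simp
  finally show ?thesis .
qed

definition monomial2_weight :: "int \<Rightarrow> int \<Rightarrow> int \<Rightarrow> int" where
  "monomial2_weight m p q = m * (m - 1) * p * (p - 1) - 2 * (m - 1) * p * q + 2 * q * (q - 1)"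

lemma of_nat_mult_pred: "(of_nat n * of_nat (n - 1) :: 'a::comm_ring_1) = of_nat n * (of_nat n - 1)"
  by (cases n) auto

lemma top_weight_monomial2:
  assumes "4 \<le> d" and "p \<le> e"
  shows "top_weight d e p 2 2
    = - 2 * of_int ((int d - 2) ^ 2 * monomial2_weight (int d - 2) (int p) (int (e - p)))"
proof -
  obtain m q where d: "d = m + 4" and e: "e = p + q"
    using assms by (metis add.commute le_add_diff_inverse)
  have weights:
    "deriv_weight 2 0 e p = of_nat p * (of_nat p - 1)"
    "deriv_weight 1 1 e p = of_nat p * of_nat q"
    "deriv_weight 0 2 e p = of_nat q * (of_nat q - 1)"
    "deriv_weight 3 0 d 2 = 0"
    "deriv_weight 2 1 d 2 = 2 * (of_nat m + 2)"
    "deriv_weight 1 2 d 2 = 2 * ((of_nat m + 2) * (of_nat m + 1))"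
    "deriv_weight 0 3 d 2 = (of_nat m + 2) * (of_nat m + 1) * of_nat m"
    unfolding deriv_weight_def d e
    by (simp_all add: numeral_eq_Suc of_nat_mult_pred[simplified] algebra_simps)
  show ?thesis
    unfolding top_weight_def weights monomial2_weight_def
    by (simp add: d e power2_eq_square algebra_simps)
qed

lemma monomial2_weight_nonzero:
  fixes m p q :: int
  assumes "2 \<le> m" and "0 \<le> p" and "2 \<le> p + q"
    and "\<not> (p = 1 \<and> q = m)" and "\<not> (p = 2 \<and> q = m - 1)" and "\<not> (p = 2 \<and> q = m)"
  shows "monomial2_weight m p q \<noteq> 0"
proof -
  consider "p = 0" | "p = 1" | "p = 2" | "3 \<le> p"
    using assms(2) by linarith
  then show ?thesis
  proof cases
    case 1
    then have "2 \<le> q" using assms(3) by simp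
    then show ?thesis using 1 by (simp add: monomial2_weight_def)
  next
    case 2
    then have "monomial2_weight m p q = 2 * q * (q - m)"
      by (simp add: monomial2_weight_def algebra_simps)
    then show ?thesis using 2 assms(3,4) by simp
  next
    case 3
    then have "monomial2_weight m p q = 2 * (q - m) * (q - m + 1)"
      by (simp add: monomial2_weight_def algebra_simps)
    then show ?thesis using 3 assms(5,6) by simp
  next
    case 4
    text \<open>Completing the square in q leaves a positive remainder once p \<ge> 3 and m \<ge> 2.\<close>
    have square: "8 * monomial2_weight m p q =
        (4 * q - 2 * ((m - 1) * p + 1)) ^ 2 + 4 * ((m - 1) * (m + 1) * (p * (p - 2)) - 1)"
      by (simp add: monomial2_weight_def algebra_simps power2_eq_square)
    have "1 * 3 \<le> (m - 1) * (m + 1)" using assms(1) by (intro mult_mono) auto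
    moreover have "3 * 1 \<le> p * (p - 2)" using 4 by (intro mult_mono) auto
    ultimately have "3 * 3 \<le> (m - 1) * (m + 1) * (p * (p - 2))" by (intro mult_mono) auto
    then have "0 < 8 * monomial2_weight m p q"
      unfolding square by (smt (verit) zero_le_power2)
    then show ?thesis by auto
  qed
qed

section \<open>Pinning coordinates and the genericity polynomial\<close>

definition pinned_matrix :: "nat set \<Rightarrow> nat \<Rightarrow> (nat \<Rightarrow> nat \<Rightarrow> 'a::comm_ring_1) \<Rightarrow> 'a mat" where
  "pinned_matrix P n M = mat n n (\<lambda>(k, p). if k \<in> P then (if k = p then 1 else 0) else M k p)"

lemma pinned_matrix_kernel:
  fixes M :: "nat \<Rightarrow> nat \<Rightarrow> 'a::idom"
  assumes det: "det (pinned_matrix P n M) \<noteq> 0"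
    and rows: "\<And>k. k < n \<Longrightarrow> k \<notin> P \<Longrightarrow> (\<Sum>p<n. v p * M k p) = 0"
    and pinned: "\<And>p. p \<in> P \<Longrightarrow> v p = 0"
    and "p < n"
  shows "v p = 0"
proof -
  have A: "pinned_matrix P n M \<in> carrier_mat n n"
    by (simp add: pinned_matrix_def)
  have "pinned_matrix P n M *\<^sub>v vec n v = 0\<^sub>v n"
  proof (rule eq_vecI)
    fix k assume "k < dim_vec (0\<^sub>v n :: 'a vec)"
    then have k: "k < n" by simp
    have "(pinned_matrix P n M *\<^sub>v vec n v) $ k
        = (\<Sum>p<n. (if k \<in> P then (if k = p then 1 else 0) else M k p) * v p)"
      using k by (simp add: pinned_matrix_def scalar_prod_def atLeast0LessThan)
    also have "\<dots> = 0"
    proof (cases "k \<in> P")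
      case True
      then have "(\<Sum>p<n. (if k \<in> P then (if k = p then 1 else 0) else M k p) * v p)
          = (\<Sum>p<n. if k = p then v p else 0)"
        by (intro sum.cong) auto
      then show ?thesis
        using True k pinned by simp
    qed (use k rows in \<open>simp add: mult.commute\<close>)
    finally show "(pinned_matrix P n M *\<^sub>v vec n v) $ k = 0\<^sub>v n $ k"
      using k by simp
  qed (simp add: pinned_matrix_def)
  then have "vec n v = 0\<^sub>v n"
    using det det_0_iff_vec_prod_zero[OF A] vec_carrier by blast
  then show ?thesis
    using \<open>p < n\<close> by (metis index_vec index_zero_vec(1))
qed

lemma det_pinned_matrix_diagonal:
  fixes M :: "nat \<Rightarrow> nat \<Rightarrow> 'a::idom"
  assumes "\<And>k p. k < n \<Longrightarrow> p < n \<Longrightarrow> k \<noteq> p \<Longrightarrow> M k p = 0"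
    and "\<And>p. p < n \<Longrightarrow> p \<notin> P \<Longrightarrow> M p p \<noteq> 0"
  shows "det (pinned_matrix P n M) \<noteq> 0"
proof -
  let ?A = "pinned_matrix P n M"
  have A: "?A \<in> carrier_mat n n"
    by (simp add: pinned_matrix_def)
  have "upper_triangular ?A"
    using assms(1) by (intro upper_triangularI) (auto simp: pinned_matrix_def)
  then have "det ?A = prod_list (diag_mat ?A)"
    using A by (rule det_upper_triangular)
  also have "\<dots> \<noteq> 0"
    using assms(2) by (auto simp: diag_mat_def pinned_matrix_def prod_list_zero_iff)
  finally show ?thesis .
qed

text \<open>The coordinates where the diagonal weight at x^2 y^(d-2) vanishes; the expected solutions
  are normalised there, with pinned_minor the determinant of that normalisation.\<close>
definition pinned_indices :: "nat \<Rightarrow> nat \<Rightarrow> nat set" where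
  "pinned_indices d e = (if e = d then {2} else if e = d - 1 then {1, 2} else {})"

definition pinned_minor :: "nat \<Rightarrow> nat \<Rightarrow> (nat \<Rightarrow> complex) \<Rightarrow> complex" where
  "pinned_minor d e a =
     (if e = d then a 2
      else if e = d - 1 then dx_coeffs a 1 * dy_coeffs d a 2 - dx_coeffs a 2 * dy_coeffs d a 1
      else 1)"

definition genericity_poly :: "nat \<Rightarrow> nat \<Rightarrow> (nat \<Rightarrow> complex) \<Rightarrow> complex" where
  "genericity_poly d e a =
     det (pinned_matrix (pinned_indices d e) (Suc e) (top_coeff d e a)) * pinned_minor d e a"

lemma poly_fun_genericity_poly:
  assumes "3 \<le> d"
  shows "poly_fun d (genericity_poly d e)"
proof -
  have "poly_fun d (\<lambda>a. det (pinned_matrix (pinned_indices d e) (Suc e) (top_coeff d e a)))"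
    unfolding pinned_matrix_def
    by (intro poly_fun_det) (auto intro: poly_fun_if poly_fun_const poly_fun_top_coeff)
  moreover have "poly_fun d (pinned_minor d e)"
    unfolding pinned_minor_def dx_coeffs_def dy_coeffs_def
    by (intro poly_fun_if poly_fun_diff poly_fun_mult poly_fun_coeff poly_fun_const) (use assms in auto)
  ultimately show ?thesis
    unfolding genericity_poly_def by (rule poly_fun_mult)
qed

lemma genericity_poly_monomial2:
  assumes "4 \<le> d" and "2 \<le> e"
  shows "genericity_poly d e (monomial_coeffs 2) \<noteq> 0"
proof -
  have "top_weight d e p 2 2 \<noteq> 0" if "p \<le> e" "p \<notin> pinned_indices d e" for p
  proof -
    have "monomial2_weight (int d - 2) (int p) (int (e - p)) \<noteq> 0"
      using assms that by (intro monomial2_weight_nonzero) (auto simp: pinned_indices_def split: if_splits)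
    then have "(of_int ((int d - 2) ^ 2 * monomial2_weight (int d - 2) (int p) (int (e - p))) :: complex) \<noteq> 0"
      using assms(1) by (simp only: of_int_eq_0_iff) simp
    then show ?thesis
      unfolding top_weight_monomial2[OF assms(1) that(1)] by simp
  qed
  then have "det (pinned_matrix (pinned_indices d e) (Suc e) (top_coeff d e (monomial_coeffs 2))) \<noteq> 0"
    using assms by (intro det_pinned_matrix_diagonal) (auto simp: top_coeff_monomial2)
  moreover have "(of_nat d :: complex) \<noteq> of_nat 2"
    using assms by (subst of_nat_eq_iff) simp
  then have "pinned_minor d e (monomial_coeffs 2) \<noteq> 0"
    using assms by (auto simp: pinned_minor_def dx_coeffs_def dy_coeffs_def monomial_coeffs_def)
  ultimately show ?thesis
    unfolding genericity_poly_def by simp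
qed

lemma top_kernel_pinned_zero:
  assumes "det (pinned_matrix (pinned_indices d e) (Suc e) (top_coeff d e a)) \<noteq> 0"
    and "top_kernel d e a v" and "\<And>p. p \<in> pinned_indices d e \<Longrightarrow> v p = 0" and "p \<le> e"
  shows "v p = 0"
  using pinned_matrix_kernel[OF assms(1), of v p] assms(2-4)
  by (simp add: top_kernel_def lessThan_Suc_atMost)

lemma top_kernel_classification:
  assumes "4 \<le> d" and "2 \<le> e" and "genericity_poly d e a \<noteq> 0" and "top_kernel d e a b"
  shows "(e = d - 1 \<and> (\<exists>s t. \<forall>p\<le>e. b p = s * dx_coeffs a p + t * dy_coeffs d a p))
    \<or> (e = d \<and> (\<exists>s. \<forall>p\<le>e. b p = s * a p)) \<or> (\<forall>p\<le>e. b p = 0)"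
proof -
  have det: "det (pinned_matrix (pinned_indices d e) (Suc e) (top_coeff d e a)) \<noteq> 0"
    and minor: "pinned_minor d e a \<noteq> 0"
    using assms(3) by (auto simp: genericity_poly_def)
  have reduce: "\<forall>p\<le>e. b p = s * c p + t * c' p"
    if kernel_c: "top_kernel d e a c" and kernel_c': "top_kernel d e a c'"
      and pinned: "\<And>p. p \<in> pinned_indices d e \<Longrightarrow> b p = s * c p + t * c' p" for s t c c'
  proof -
    have sol: "top_kernel d e a (\<lambda>p. s * c p + t * c' p)"
      using kernel_c kernel_c' by (rule top_kernel_lincomb)
    have "top_kernel d e a (\<lambda>p. 1 * b p + (- 1) * (s * c p + t * c' p))"
      by (rule top_kernel_lincomb[OF assms(4) sol])
    then have "top_kernel d e a (\<lambda>p. b p - (s * c p + t * c' p))"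
      by (simp add: algebra_simps)
    then have "b p - (s * c p + t * c' p) = 0" if "p \<le> e" for p
      by (rule top_kernel_pinned_zero[OF det]) (use pinned that in simp_all)
    then show ?thesis by simp
  qed
  consider "e = d" | "e = d - 1" | "e \<noteq> d" "e \<noteq> d - 1" by blast
  then show ?thesis
  proof cases
    case 1
    then have "a 2 \<noteq> 0" using minor by (simp add: pinned_minor_def)
    have kernel_a: "top_kernel d e a a"
      using 1 assms(1) top_kernel_self[of d a] by simp
    have "\<forall>p\<le>e. b p = b 2 / a 2 * a p + 0 * a p"
      using \<open>a 2 \<noteq> 0\<close> 1 by (intro reduce[OF kernel_a kernel_a]) (auto simp: pinned_indices_def)
    then have "\<forall>p\<le>e. b p = b 2 / a 2 * a p" by simp
    then show ?thesis using 1 by blast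
  next
    case 2
    define D where "D = dx_coeffs a 1 * dy_coeffs d a 2 - dx_coeffs a 2 * dy_coeffs d a 1"
    have "e \<noteq> d" using 2 assms(1) by linarith
    then have "pinned_minor d e a = D"
      using 2 by (simp add: pinned_minor_def D_def)
    then have "D \<noteq> 0" using minor by simp
    have kernel_dx: "top_kernel d e a (dx_coeffs a)" and kernel_dy: "top_kernel d e a (dy_coeffs d a)"
      using 2 assms(1) top_kernel_dx[of d a] top_kernel_dy[of d a] by simp_all
    text \<open>Cramer's rule on the two pinned coordinates.\<close>
    define s where "s = (b 1 * dy_coeffs d a 2 - b 2 * dy_coeffs d a 1) / D"
    define t where "t = (dx_coeffs a 1 * b 2 - dx_coeffs a 2 * b 1) / D"
    have "b 1 = s * dx_coeffs a 1 + t * dy_coeffs d a 1" and "b 2 = s * dx_coeffs a 2 + t * dy_coeffs d a 2"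
      using \<open>D \<noteq> 0\<close> unfolding s_def t_def by (simp_all add: field_simps) (simp_all add: D_def algebra_simps)
    then have "\<forall>p\<le>e. b p = s * dx_coeffs a p + t * dy_coeffs d a p"
      by (intro reduce[OF kernel_dx kernel_dy])
         (auto simp only: pinned_indices_def if_not_P[OF \<open>e \<noteq> d\<close>] if_P[OF 2] insert_iff empty_iff)
    then show ?thesis using 2 by blast
  next
    case 3
    then have "\<forall>p\<le>e. b p = 0 * b p + 0 * b p"
      by (intro reduce[OF assms(4) assms(4)]) (auto simp: pinned_indices_def)
    then show ?thesis by simp
  qed
qed

lemma top_kernel_generic_iff:
  assumes "4 \<le> d" and "2 \<le> e" and "genericity_poly d e a \<noteq> 0"
  shows "top_kernel d e a b \<longleftrightarrow>
    (e = d - 1 \<and> (\<exists>s t. \<forall>p\<le>e. b p = s * dx_coeffs a p + t * dy_coeffs d a p))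
    \<or> (e = d \<and> (\<exists>s. \<forall>p\<le>e. b p = s * a p)) \<or> (\<forall>p\<le>e. b p = 0)"
proof
  assume "top_kernel d e a b"
  then show "(e = d - 1 \<and> (\<exists>s t. \<forall>p\<le>e. b p = s * dx_coeffs a p + t * dy_coeffs d a p))
    \<or> (e = d \<and> (\<exists>s. \<forall>p\<le>e. b p = s * a p)) \<or> (\<forall>p\<le>e. b p = 0)"
    using assms by (intro top_kernel_classification)
next
  assume "(e = d - 1 \<and> (\<exists>s t. \<forall>p\<le>e. b p = s * dx_coeffs a p + t * dy_coeffs d a p))
    \<or> (e = d \<and> (\<exists>s. \<forall>p\<le>e. b p = s * a p)) \<or> (\<forall>p\<le>e. b p = 0)"
  then consider (derivatives) s t where "e = d - 1" "\<forall>p\<le>e. b p = s * dx_coeffs a p + t * dy_coeffs d a p"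
    | (multiple) s where "e = d" "\<forall>p\<le>e. b p = s * a p"
    | (zero) "\<forall>p\<le>e. b p = 0"
    by blast
  then show "top_kernel d e a b"
  proof cases
    case derivatives
    then show ?thesis
      using assms(1) top_kernel_lincomb[OF top_kernel_dx top_kernel_dy, of d a s t]
        top_kernel_cong[of e b "\<lambda>p. s * dx_coeffs a p + t * dy_coeffs d a p" d a]
      by simp
  next
    case multiple
    then show ?thesis
      using assms(1) top_kernel_self[of d a] top_kernel_lincomb[of d e a a a s 0]
        top_kernel_cong[of e b "\<lambda>p. s * a p" d a]
      by simp
  next
    case zero
    then show ?thesis
      using top_kernel_cong[of e b "\<lambda>p. 0" d a] by (simp add: top_kernel_def)
  qed
qed

lemma bform_deriv_eq_0:
  assumes "n < r + s"
  shows "bform_deriv r s n c x y = 0"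
proof -
  have "deriv_weight r s n i = 0" if "i \<le> n" for i
    using that assms deriv_weight_nonzeroD[of r s n i] by fastforce
  then show ?thesis
    by (simp add: bform_deriv_def)
qed

lemma Top_bform_low_degree:
  assumes "e \<le> 1"
  shows "Top (bform d a) (bform e b) x y = 0"
  using assms by (simp add: Top_bform_deriv bform_deriv_eq_0)

lemma bform_scale: "(\<lambda>x y. s * bform n c x y) = bform n (\<lambda>i. s * c i)"
  by (simp add: bform_def sum_distrib_left mult.assoc)

lemma bform_zero: "(\<lambda>x y. 0) = bform n (\<lambda>i. 0)"
  by (simp add: bform_def)

lemma Top_bform_eq_0_iff_generic:
  assumes "4 \<le> d" and generic: "\<And>e. 2 \<le> e \<Longrightarrow> genericity_poly d e a \<noteq> 0"
  shows "(\<forall>x y. Top (bform d a) (bform e b) x y = 0) \<longleftrightarrow>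
           ((e = 0 \<and> (\<exists>s. bform e b = (\<lambda>x y. s))) \<or>
            (e = 1 \<and> (\<exists>s t. bform e b = (\<lambda>x y. s * x + t * y))) \<or>
            (e = d - 1 \<and> (\<exists>s t. bform e b =
                (\<lambda>x y. s * D1 (bform d a) x y + t * D2 (bform d a) x y))) \<or>
            (e = d \<and> (\<exists>s. bform e b = (\<lambda>x y. s * bform d a x y))) \<or>
            bform e b = (\<lambda>x y. 0))"
proof (cases "e \<le> 1")
  case True
  have "(e = 0 \<and> (\<exists>s. bform e b = (\<lambda>x y. s))) \<or> (e = 1 \<and> (\<exists>s t. bform e b = (\<lambda>x y. s * x + t * y)))"
  proof (cases "e = 0")
    case False
    with True have "e = 1" by simp
    then have "bform e b = (\<lambda>x y. b 1 * x + b 0 * y)"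
      by (auto simp: bform_def intro!: ext)
    with \<open>e = 1\<close> show ?thesis by blast
  qed (auto simp: bform_def)
  then show ?thesis
    using Top_bform_low_degree[OF True] by blast
next
  case False
  then have "2 \<le> e" by simp
  have derivs: "(\<lambda>x y. s * D1 (bform d a) x y + t * D2 (bform d a) x y)
      = bform (d - 1) (\<lambda>i. s * dx_coeffs a i + t * dy_coeffs d a i)" for s t
    using assms(1) by (simp add: D1_bform D2_bform bform_lincomb)
  have derivs_iff: "(e = d - 1 \<and> (\<exists>s t. bform e b =
        (\<lambda>x y. s * D1 (bform d a) x y + t * D2 (bform d a) x y)))
      \<longleftrightarrow> (e = d - 1 \<and> (\<exists>s t. \<forall>p\<le>e. b p = s * dx_coeffs a p + t * dy_coeffs d a p))"
    by (simp add: derivs bform_eq_iff cong: conj_cong)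
  have multiple_iff: "(e = d \<and> (\<exists>s. bform e b = (\<lambda>x y. s * bform d a x y)))
      \<longleftrightarrow> (e = d \<and> (\<exists>s. \<forall>p\<le>e. b p = s * a p))"
    by (simp add: bform_scale bform_eq_iff cong: conj_cong)
  have zero_iff: "bform e b = (\<lambda>x y. 0) \<longleftrightarrow> (\<forall>p\<le>e. b p = 0)"
    by (simp add: bform_zero[of e] bform_eq_iff)
  have "(\<forall>x y. Top (bform d a) (bform e b) x y = 0) \<longleftrightarrow> top_kernel d e a b"
    by (rule Top_bform_eq_0_iff)
  also have "\<dots> \<longleftrightarrow>
    (e = d - 1 \<and> (\<exists>s t. \<forall>p\<le>e. b p = s * dx_coeffs a p + t * dy_coeffs d a p))
    \<or> (e = d \<and> (\<exists>s. \<forall>p\<le>e. b p = s * a p)) \<or> (\<forall>p\<le>e. b p = 0)"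
    using assms(1) \<open>2 \<le> e\<close> generic[OF \<open>2 \<le> e\<close>] by (rule top_kernel_generic_iff)
  finally show ?thesis
    unfolding derivs_iff multiple_iff zero_iff using \<open>2 \<le> e\<close> by simp
qed

theorem lemma9p2:
  fixes d :: nat
  assumes "d \<ge> 4"
  shows "very_general d (\<lambda>a. \<forall>(e::nat) (b::nat \<Rightarrow> complex).
           (\<forall>x y. Top (bform d a) (bform e b) x y = 0) \<longleftrightarrow>
           ((e = 0 \<and> (\<exists>s. bform e b = (\<lambda>x y. s))) \<or>
            (e = 1 \<and> (\<exists>s t. bform e b = (\<lambda>x y. s * x + t * y))) \<or>
            (e = d - 1 \<and> (\<exists>s t. bform e b =
                (\<lambda>x y. s * D1 (bform d a) x y + t * D2 (bform d a) x y))) \<or>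
            (e = d \<and> (\<exists>s. bform e b = (\<lambda>x y. s * bform d a x y))) \<or>
            bform e b = (\<lambda>x y. 0)))"
  unfolding very_general_def
proof (rule exI[of _ "\<lambda>k. {a. genericity_poly d (k + 2) a = 0}"],
    intro conjI allI impI Top_bform_eq_0_iff_generic[OF assms])
  fix k
  have "poly_fun d (genericity_poly d (k + 2))"
    using assms by (intro poly_fun_genericity_poly) simp
  moreover have "genericity_poly d (k + 2) (monomial_coeffs 2) \<noteq> 0"
    using assms by (intro genericity_poly_monomial2) simp_all
  ultimately show "proper_subvariety d {a. genericity_poly d (k + 2) a = 0}"
    by (rule proper_subvariety_zero_set)
next
  fix a :: "nat \<Rightarrow> complex" and e :: nat
  assume "a \<notin> (\<Union>k. {a. genericity_poly d (k + 2) a = 0})" and "2 \<le> e"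
  then show "genericity_poly d e a \<noteq> 0"
    by (metis (mono_tags, lifting) UNIV_I UN_I le_add_diff_inverse2 mem_Collect_eq)
qed

end
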